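(* Let $m,n\ge2$ be integers with $(m-1)(n-1)$ even. Then the rectangular grid graph $\mathcal R_{(m-1)\times(n-1)}$ (with either proper black/white coloring) satisfies \[|\mathcal{C}_B(\mathcal R_{(m-1)\times(n-1)})|=2^{(\gcd(m,n)-1)/2}.\]
   Context: $\mathcal R_{a\times b}$ is the graph with vertex set $\{1,\dots,b\}\times\{1,\dots,a\}\subset\mathbf{Z}^2$ and edges between vertices at Euclidean distance $1$. A channel of a graph is a vertex set $C$ such that every vertex is adjacent to an even number of vertices of $C$ (the empty set included). For a bipartite graph with black/white coloring, $\mathcal{C}_B$ denotes the set of channels consisting only of black vertices. *)

theory Defs
  imports Main
begin

definition grid_vertices :: "nat \<Rightarrow> nat \<Rightarrow> (int \<times> int) set" where
  "grid_vertices a b = {1..int b} \<times> {1..int a}"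

definition grid_adj :: "int \<times> int \<Rightarrow> int \<times> int \<Rightarrow> bool" where
  "grid_adj p q \<longleftrightarrow> (fst p - fst q)^2 + (snd p - snd q)^2 = 1"

definition is_channel :: "'v set \<Rightarrow> ('v \<Rightarrow> 'v \<Rightarrow> bool) \<Rightarrow> 'v set \<Rightarrow> bool" where
  "is_channel V adj C \<longleftrightarrow> C \<subseteq> V \<and> (\<forall>v\<in>V. even (card {u\<in>C. adj v u}))"

definition grid_color_class :: "nat \<Rightarrow> nat \<Rightarrow> int \<Rightarrow> (int \<times> int) set" where
  "grid_color_class a b c = {p \<in> grid_vertices a b. (fst p + snd p) mod 2 = c}"

definition black_channels :: "nat \<Rightarrow> nat \<Rightarrow> int \<Rightarrow> (int \<times> int) set set" where
  "black_channels a b c =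
     {C. is_channel (grid_vertices a b) grid_adj C \<and> C \<subseteq> grid_color_class a b c}"

end

theory Submission
  imports Defs
begin

text \<open>The channel condition at an interior vertex says that \<open>C(x-1,y) + C(x+1,y) = C(x,y-1) + C(x,y+1)\<close>
  mod 2. Extend \<open>C\<close> by zero to the frame lines \<open>x = 0, n\<close> and \<open>y = 0, m\<close> and then to all of
  \<open>\<int>\<^sup>2\<close> by reflection in these lines; the condition then holds everywhere. In the diagonal
  coordinates \<open>x = i + j + c\<close>, \<open>y = i - j\<close> of the black sublattice it reads
  \<open>F(i,j) + F(i+1,j+1) = F(i,j+1) + F(i+1,j)\<close>, so \<open>F(i,j) = g(i) + g(j)\<close> for a profile \<open>g\<close>.
  Vanishing on the frame makes \<open>g\<close> invariant under \<open>i \<mapsto> -i-c\<close> and under translation by \<open>m\<close> and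
  \<open>n\<close>, hence by \<open>d = gcd m n\<close>; conversely every such \<open>g\<close> yields a channel. For odd \<open>d = 2K + 1\<close>
  the profile is determined, up to complement, by the free choice of \<open>g(cK + t) \<noteq> g(cK)\<close> for
  \<open>t = 1..K\<close>, giving \<open>2\<^sup>K\<close> channels.\<close>

lemma grid_adj_iff:
  "grid_adj (x, y) u \<longleftrightarrow> u \<in> {(x - 1, y), (x + 1, y), (x, y - 1), (x, y + 1)}"
proof -
  obtain p q where u: "u = (p, q)" by (cases u)
  have "(x - p)\<^sup>2 + (y - q)\<^sup>2 = 1 \<longleftrightarrow> ((x - p)\<^sup>2 = 1 \<and> y = q) \<or> (x = p \<and> (y - q)\<^sup>2 = 1)"
  proof
    assume h: "(x - p)\<^sup>2 + (y - q)\<^sup>2 = 1"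
    have "x - p = 0 \<or> y - q = 0"
    proof (rule ccontr)
      assume "\<not> (x - p = 0 \<or> y - q = 0)"
      then have "1 \<le> (x - p)\<^sup>2" "1 \<le> (y - q)\<^sup>2"
        by (simp_all add: int_one_le_iff_zero_less)
      with h show False by linarith
    qed
    with h show "((x - p)\<^sup>2 = 1 \<and> y = q) \<or> (x = p \<and> (y - q)\<^sup>2 = 1)"
      by auto
  qed auto
  then show ?thesis
    by (auto simp: grid_adj_def u power2_eq_1_iff)
qed

lemma even_card_filter_four_iff:
  assumes "distinct [a, b, c, d]"
  shows "even (card {u \<in> {a, b, c, d}. P u}) \<longleftrightarrow> ((P a \<longleftrightarrow> P b) \<longleftrightarrow> (P c \<longleftrightarrow> P d))"
proof -
  have "{u \<in> {a, b, c, d}. P u} = {a, b, c, d} \<inter> Collect P" by auto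
  then have "card {u \<in> {a, b, c, d}. P u} = (\<Sum>u\<in>{a, b, c, d}. of_bool (P u))"
    by (simp add: sum.If_cases)
  also have "\<dots> = of_bool (P a) + of_bool (P b) + of_bool (P c) + (of_bool (P d) :: nat)"
    using assms by simp
  finally show ?thesis by auto
qed

lemma even_card_grid_neighbours_iff:
  "even (card {u \<in> C. grid_adj (x, y) u}) \<longleftrightarrow>
     (((x - 1, y) \<in> C \<longleftrightarrow> (x + 1, y) \<in> C) \<longleftrightarrow> ((x, y - 1) \<in> C \<longleftrightarrow> (x, y + 1) \<in> C))"
proof -
  have "{u \<in> C. grid_adj (x, y) u} = {u \<in> {(x - 1, y), (x + 1, y), (x, y - 1), (x, y + 1)}. u \<in> C}"
    by (auto simp: grid_adj_iff)
  then show ?thesis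
    by (simp only:) (rule even_card_filter_four_iff, auto)
qed

definition reflect :: "int \<Rightarrow> int \<Rightarrow> int" where
  "reflect N x = (let r = x mod (2 * N) in min r (2 * N - r))"

lemma reflect_mod: "reflect N (x mod (2 * N)) = reflect N x"
  by (simp add: reflect_def)

lemma reflect_eq_min: "0 \<le> x \<Longrightarrow> x \<le> 2 * N \<Longrightarrow> reflect N x = min x (2 * N - x)"
  by (cases "x = 2 * N") (simp_all add: reflect_def)

lemma reflect_eq_self: "0 \<le> x \<Longrightarrow> x \<le> N \<Longrightarrow> N > 0 \<Longrightarrow> reflect N x = x"
  by (simp add: reflect_eq_min)

lemma reflect_uminus: "N > 0 \<Longrightarrow> reflect N (- x) = reflect N x"
  by (simp add: reflect_def Let_def zmod_zminus1_eq_if min.commute)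

lemma reflect_neighbours:
  assumes "N > 0"
  shows "(reflect N x = 0 \<or> reflect N x = N) \<and> reflect N (x - 1) = reflect N (x + 1) \<or>
    0 < reflect N x \<and> reflect N x < N \<and>
    {reflect N (x - 1), reflect N (x + 1)} = {reflect N x - 1, reflect N x + 1}"
proof -
  define r where "r = x mod (2 * N)"
  have r: "0 \<le> r" "r < 2 * N" using assms by (simp_all add: r_def)
  have to_r: "reflect N x = reflect N r" "reflect N (x - 1) = reflect N (r - 1)"
    "reflect N (x + 1) = reflect N (r + 1)"
    unfolding r_def
    by (metis reflect_mod, metis reflect_mod mod_diff_left_eq, metis reflect_mod mod_add_left_eq)
  have "reflect N (-1) = 1"
    using reflect_uminus[OF assms, of 1] assms by (simp add: reflect_eq_min)
  consider "r = 0" | "0 < r \<and> r < N" | "r = N" | "N < r \<and> r < 2 * N - 1" | "r = 2 * N - 1"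
    using r by linarith
  then show ?thesis
    using r unfolding to_r by cases (auto simp: \<open>reflect N (-1) = 1\<close> reflect_eq_min min_def)
qed

lemma periodic_add_mult:
  fixes g :: "int \<Rightarrow> 'a"
  assumes "\<And>i. g (i + p) = g i"
  shows "g (i + t * p) = g i"
proof (induction t rule: int_induct[where k = 0])
  case (step1 t)
  then show ?case using assms[of "i + t * p"] by (simp add: algebra_simps)
next
  case (step2 t)
  then show ?case using assms[of "i + (t - 1) * p"] by (simp add: algebra_simps)
qed simp

lemma periodic_gcd:
  fixes g :: "int \<Rightarrow> 'a"
  assumes "\<And>i. g (i + p) = g i" and "\<And>i. g (i + q) = g i"
  shows "g (i + gcd p q) = g i"
proof -
  obtain u v where "u * p + v * q = gcd p q"
    using bezout_int by blast
  then have "g (i + gcd p q) = g ((i + v * q) + u * p)"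
    by (metis add.assoc add.commute)
  also have "\<dots> = g i"
    using periodic_add_mult[of g, OF assms(1)] periodic_add_mult[of g, OF assms(2)] by simp
  finally show ?thesis .
qed

text \<open>A point of colour \<open>c\<close> has diagonal coordinates \<open>i = (x + y - c) / 2\<close>, \<open>j = (x - y - c) / 2\<close>.\<close>

definition diag_pattern :: "int \<Rightarrow> (int \<Rightarrow> bool) \<Rightarrow> int \<Rightarrow> int \<Rightarrow> bool" where
  "diag_pattern c g x y \<longleftrightarrow>
     (x + y) mod 2 = c \<and> g ((x + y - c) div 2) \<noteq> g ((x - y - c) div 2)"

definition diag_channel :: "nat \<Rightarrow> nat \<Rightarrow> int \<Rightarrow> (int \<Rightarrow> bool) \<Rightarrow> (int \<times> int) set" where
  "diag_channel m n c g = {p \<in> grid_vertices (m - 1) (n - 1). diag_pattern c g (fst p) (snd p)}"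

lemma diag_coordsE:
  fixes c x y :: int
  assumes "c \<in> {0, 1}" and "(x + y) mod 2 = c"
  obtains i j where "x = i + j + c" and "y = i - j"
proof
  show "x = (x + y - c) div 2 + (x - y - c) div 2 + c" "y = (x + y - c) div 2 - (x - y - c) div 2"
    using assms by (auto, presburger+)
qed

lemma diag_pattern_diag_coords:
  assumes "c \<in> {0, 1}"
  shows "diag_pattern c g (i + j + c) (i - j) \<longleftrightarrow> g i \<noteq> g j"
  using assms by (auto simp: diag_pattern_def)

lemma diag_pattern_four_cycle:
  assumes c: "c \<in> {0, 1}"
  shows "(diag_pattern c g (x - 1) y \<longleftrightarrow> diag_pattern c g (x + 1) y) \<longleftrightarrow>
    (diag_pattern c g x (y - 1) \<longleftrightarrow> diag_pattern c g x (y + 1))"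
proof (cases "(x - 1 + y) mod 2 = c")
  case True
  then obtain i j where x: "x - 1 = i + j + c" and y: "y = i - j"
    using diag_coordsE[OF c] by blast
  have "x - 1 = i + j + c" "x + 1 = (i + 1) + (j + 1) + c" "x = i + (j + 1) + c" "x = (i + 1) + j + c"
    "y = i - j" "y = (i + 1) - (j + 1)" "y - 1 = i - (j + 1)" "y + 1 = (i + 1) - j"
    using x y by simp_all
  then show ?thesis
    using diag_pattern_diag_coords[OF c, of g] by (smt (verit))
next
  case False
  then have "\<not> (x + 1 + y) mod 2 = c" "\<not> (x + (y - 1)) mod 2 = c" "\<not> (x + (y + 1)) mod 2 = c"
    by presburger+
  with False show ?thesis by (simp add: diag_pattern_def)
qed

lemma grid_vertices_eq:
  "m \<ge> 2 \<Longrightarrow> n \<ge> 2 \<Longrightarrow> grid_vertices (m - 1) (n - 1) = {1..int n - 1} \<times> {1..int m - 1}"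
  by (simp add: grid_vertices_def)

lemma diag_pattern_frame:
  assumes c: "c \<in> {0, 1}"
    and per_m: "\<And>i. g (i + int m) = g i" and per_n: "\<And>i. g (i + int n) = g i"
    and symm: "\<And>i. g (- i - c) = g i"
    and frame: "x = 0 \<or> x = int n \<or> y = 0 \<or> y = int m"
  shows "\<not> diag_pattern c g x y"
proof
  assume pat: "diag_pattern c g x y"
  then have "(x + y) mod 2 = c" by (simp add: diag_pattern_def)
  then obtain i j where x: "x = i + j + c" and y: "y = i - j"
    using diag_coordsE[OF c] by blast
  have "g i \<noteq> g j"
    using pat diag_pattern_diag_coords[OF c] by (simp add: x y)
  moreover have "j = - i - c \<or> j = - (i - int n) - c \<or> j = i \<or> j + int m = i"
    using frame by (auto simp: x y)
  ultimately show False
    using symm[of i] symm[of "i - int n"] per_n[of "i - int n"] per_m[of j] by auto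
qed

lemma diag_channel_in_black_channels:
  assumes "m \<ge> 2" "n \<ge> 2" and c: "c \<in> {0, 1}"
    and per_m: "\<And>i. g (i + int m) = g i" and per_n: "\<And>i. g (i + int n) = g i"
    and symm: "\<And>i. g (- i - c) = g i"
  shows "diag_channel m n c g \<in> black_channels (m - 1) (n - 1) c"
proof -
  let ?V = "grid_vertices (m - 1) (n - 1)"
  note V = grid_vertices_eq[OF assms(1,2)]
  have mem: "(x, y) \<in> diag_channel m n c g \<longleftrightarrow> diag_pattern c g x y"
    if "0 \<le> x" "x \<le> int n" "0 \<le> y" "y \<le> int m" for x y
  proof (cases "x = 0 \<or> x = int n \<or> y = 0 \<or> y = int m")
    case True
    then show ?thesis
      using diag_pattern_frame[where g = g, OF c per_m per_n symm True] unfolding diag_channel_def by simp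
  next
    case False
    with that show ?thesis unfolding diag_channel_def V by simp
  qed
  have "even (card {u \<in> diag_channel m n c g. grid_adj (x, y) u})" if "(x, y) \<in> ?V" for x y
  proof -
    have "1 \<le> x" "x \<le> int n - 1" "1 \<le> y" "y \<le> int m - 1"
      using that unfolding V by auto
    then show ?thesis
      unfolding even_card_grid_neighbours_iff using mem diag_pattern_four_cycle[OF c] by simp
  qed
  then show ?thesis
    by (auto simp: black_channels_def is_channel_def grid_color_class_def diag_channel_def
        diag_pattern_def)
qed

locale grid_black_channel =
  fixes m n :: nat and c :: int and C :: "(int \<times> int) set"
  assumes m: "m \<ge> 2" and n: "n \<ge> 2" and c: "c \<in> {0, 1}"
    and C: "C \<in> black_channels (m - 1) (n - 1) c"
begin

lemma C_subset: "(x, y) \<in> C \<Longrightarrow> 1 \<le> x \<and> x < int n \<and> 1 \<le> y \<and> y < int m"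
  using C unfolding black_channels_def is_channel_def grid_vertices_eq[OF m n] by auto

lemma frame_not_in_C: "(0, y) \<notin> C" "(int n, y) \<notin> C" "(x, 0) \<notin> C" "(x, int m) \<notin> C"
  by (auto dest: C_subset)

lemma C_colour: "p \<in> C \<Longrightarrow> (fst p + snd p) mod 2 = c"
  using C unfolding black_channels_def grid_color_class_def by auto

text \<open>Reflection in the lines \<open>x = 0, n\<close> and \<open>y = 0, m\<close>, on which \<open>C\<close> vanishes, preserves
  the channel condition.\<close>

definition extended :: "int \<Rightarrow> int \<Rightarrow> bool" where
  "extended x y \<longleftrightarrow> (reflect (int n) x, reflect (int m) y) \<in> C"

lemma extended_eq: "0 \<le> x \<Longrightarrow> x \<le> int n \<Longrightarrow> 0 \<le> y \<Longrightarrow> y \<le> int m \<Longrightarrow> extended x y \<longleftrightarrow> (x, y) \<in> C"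
  using m n by (simp add: extended_def reflect_eq_self)

lemma extended_frame: "\<not> extended 0 y" "\<not> extended (int n) y" "\<not> extended x 0" "\<not> extended x (int m)"
  using m n frame_not_in_C by (simp_all add: extended_def reflect_eq_self)

lemma extended_uminus: "extended x (- y) \<longleftrightarrow> extended x y"
  using m by (simp add: extended_def reflect_uminus)

lemma extended_four_cycle: "(extended (x - 1) y \<longleftrightarrow> extended (x + 1) y) \<longleftrightarrow> (extended x (y - 1) \<longleftrightarrow> extended x (y + 1))"
proof -
  define X Y where "X = reflect (int n) x" and "Y = reflect (int m) y"
  have pos: "int n > 0" "int m > 0" using m n by simp_all
  show ?thesis
  proof (cases "(X = 0 \<or> X = int n) \<and> reflect (int n) (x - 1) = reflect (int n) (x + 1)")
    case True
    then show ?thesis using frame_not_in_C by (auto simp: extended_def X_def)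
  next
    case False
    then have X: "0 < X" "X < int n"
      and X_nb: "{reflect (int n) (x - 1), reflect (int n) (x + 1)} = {X - 1, X + 1}"
      using reflect_neighbours[OF pos(1), of x] by (auto simp: X_def)
    show ?thesis
    proof (cases "(Y = 0 \<or> Y = int m) \<and> reflect (int m) (y - 1) = reflect (int m) (y + 1)")
      case True
      then show ?thesis using frame_not_in_C by (auto simp: extended_def Y_def)
    next
      case False
      then have Y: "0 < Y" "Y < int m"
        and Y_nb: "{reflect (int m) (y - 1), reflect (int m) (y + 1)} = {Y - 1, Y + 1}"
        using reflect_neighbours[OF pos(2), of y] by (auto simp: Y_def)
      have "even (card {u \<in> C. grid_adj (X, Y) u})"
        using C X Y unfolding black_channels_def is_channel_def grid_vertices_eq[OF m n] by auto
      then have "((X - 1, Y) \<in> C \<longleftrightarrow> (X + 1, Y) \<in> C) \<longleftrightarrow> ((X, Y - 1) \<in> C \<longleftrightarrow> (X, Y + 1) \<in> C)"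
        by (simp add: even_card_grid_neighbours_iff)
      then show ?thesis
        using X_nb Y_nb unfolding extended_def X_def[symmetric] Y_def[symmetric]
        by (auto simp: doubleton_eq_iff)
    qed
  qed
qed

definition profile :: "int \<Rightarrow> bool" where
  "profile i \<longleftrightarrow> extended (i + c) i"

lemma extended_diag: "extended (i + j + c) (i - j) \<longleftrightarrow> profile i \<noteq> profile j"
proof -
  define F where "F i j \<longleftrightarrow> extended (i + j + c) (i - j)" for i j
  have cycle: "(F i j \<longleftrightarrow> F (i + 1) (j + 1)) \<longleftrightarrow> (F i (j + 1) \<longleftrightarrow> F (i + 1) j)" for i j
    using extended_four_cycle[of "i + j + c + 1" "i - j"] unfolding F_def
    by (simp add: algebra_simps)
  have row_step: "(F i j \<noteq> F i (j + 1)) \<longleftrightarrow> (F 0 j \<noteq> F 0 (j + 1))" for i j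
    using periodic_add_mult[of "\<lambda>i. F i j \<noteq> F i (j + 1)" 1 0 i] cycle by auto
  have F_sol: "F i j \<longleftrightarrow> (F i 0 \<noteq> (F 0 j \<noteq> F 0 0))" for i j
  proof (induction j rule: int_induct[where k = 0])
    case (step1 j)
    then show ?case using row_step[of i j] by blast
  next
    case (step2 j)
    then show ?case using row_step[of i "j - 1"] by auto
  qed blast
  moreover have "\<not> F 0 0" and "F 0 j \<longleftrightarrow> profile j" and "F i 0 \<longleftrightarrow> profile i"
    using extended_frame(3)[of c] extended_uminus[of "j + c" j] by (simp_all add: F_def profile_def)
  ultimately show ?thesis by (simp add: F_def)
qed

lemma profile_reflect: "profile (- i - c) = profile i"
  using extended_diag[of i "- i - c"] extended_frame(1) by auto

lemma profile_period_m: "profile (i + int m) = profile i"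
  using extended_diag[of "i + int m" i] extended_frame(4) by (auto simp: algebra_simps)

lemma profile_period_n: "profile (i + int n) = profile i"
  using extended_diag[of "i + int n" "- i - c"] extended_frame(2) profile_reflect[of i]
  by (auto simp: algebra_simps)

lemma C_eq_diag_channel: "C = diag_channel m n c profile"
proof (rule set_eqI, clarify)
  fix x y
  show "(x, y) \<in> C \<longleftrightarrow> (x, y) \<in> diag_channel m n c profile"
  proof (cases "(x, y) \<in> grid_vertices (m - 1) (n - 1) \<and> (x + y) mod 2 = c")
    case True
    then obtain i j where x: "x = i + j + c" and y: "y = i - j"
      using diag_coordsE[OF c] by blast
    have "(x, y) \<in> C \<longleftrightarrow> extended x y"
      using True extended_eq unfolding grid_vertices_eq[OF m n] by auto
    then show ?thesis
      using True extended_diag diag_pattern_diag_coords[OF c]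
      by (simp add: diag_channel_def x y)
  next
    case False
    then show ?thesis
      using C C_colour by (auto simp: diag_channel_def diag_pattern_def black_channels_def
          is_channel_def)
  qed
qed

end

text \<open>The \<open>(2K + 1)\<close>-periodic function symmetric about \<open>c K\<close>, the centre of \<open>i \<mapsto> -i-c\<close> modulo
  \<open>2K + 1\<close>, that holds exactly at the distances in \<open>S\<close> from the centre.\<close>

definition sym_pattern :: "int \<Rightarrow> int \<Rightarrow> int set \<Rightarrow> int \<Rightarrow> bool" where
  "sym_pattern K c S i \<longleftrightarrow>
     (let r = (i - c * K) mod (2 * K + 1) in r \<in> S \<or> 2 * K + 1 - r \<in> S)"

lemma sym_pattern_periodic: "sym_pattern K c S (i + (2 * K + 1)) = sym_pattern K c S i"
proof -
  have "i + (2 * K + 1) - c * K = (i - c * K) + (2 * K + 1)" by simp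
  then show ?thesis by (simp only: sym_pattern_def mod_add_self2)
qed

lemma sym_pattern_reflect:
  assumes "K \<ge> 0" shows "sym_pattern K c S (- i - c) = sym_pattern K c S i"
proof -
  define a D where "a = i - c * K" and "D = 2 * K + 1"
  have "- i - c - c * K = - a + (- c) * D"
    by (simp add: a_def D_def algebra_simps)
  then have "(- i - c - c * K) mod D = (- a) mod D"
    by (metis mod_mult_self1)
  also have "\<dots> = (if a mod D = 0 then 0 else D - a mod D)"
    by (rule zmod_zminus1_eq_if)
  finally show ?thesis
    unfolding sym_pattern_def a_def[symmetric] D_def[symmetric] Let_def by auto
qed

lemma sym_pattern_centre:
  assumes "S \<subseteq> {1..K}" shows "\<not> sym_pattern K c S (c * K)"
proof -
  have "2 * K + 1 \<notin> S"
  proof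
    assume "2 * K + 1 \<in> S"
    with assms have "2 * K + 1 \<in> {1..K}" by blast
    then show False by auto
  qed
  with assms show ?thesis by (auto simp: sym_pattern_def)
qed

lemma sym_pattern_offset:
  assumes "S \<subseteq> {1..K}" and "t \<in> {1..K}"
  shows "sym_pattern K c S (c * K + t) \<longleftrightarrow> t \<in> S"
  using assms by (auto simp: sym_pattern_def)

lemma sym_pattern_of_function:
  fixes g :: "int \<Rightarrow> 'a"
  assumes "K \<ge> 0"
    and per: "\<And>i. g (i + (2 * K + 1)) = g i" and symm: "\<And>i. g (- i - c) = g i"
  shows "sym_pattern K c {t \<in> {1..K}. g (c * K + t) \<noteq> g (c * K)} i \<longleftrightarrow> g i \<noteq> g (c * K)"
proof -
  define D where "D = 2 * K + 1"
  define r where "r = (i - c * K) mod D"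
  have per_D: "g (j + D) = g j" for j using per by (simp add: D_def)
  have "D > 0" using assms by (simp add: D_def)
  then have r: "0 \<le> r" "r < D" unfolding r_def by simp_all
  have "g i = g (c * K + r + ((i - c * K) div D) * D)"
    by (simp add: r_def)
  also have "\<dots> = g (c * K + r)"
    by (rule periodic_add_mult[of g D, OF per_D])
  finally have gi: "g i = g (c * K + r)" .
  have mirror: "g (c * K + r) = g (c * K + (D - r))" if "K < r"
  proof -
    have "g (c * K + r) = g (c * K + r - D)"
      using per_D[of "c * K + r - D"] by simp
    also have "\<dots> = g (- (c * K + r - D) - c)"
      by (rule symm[symmetric])
    also have "\<dots> = g (- (c * K + r - D) - c + c * D)"
      by (rule periodic_add_mult[of g D, OF per_D, symmetric])
    finally show ?thesis by (simp add: D_def algebra_simps)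
  qed
  have pat: "sym_pattern K c S i \<longleftrightarrow> r \<in> S \<or> D - r \<in> S" for S
    by (simp add: sym_pattern_def Let_def r_def D_def)
  consider "r = 0" | "1 \<le> r \<and> r \<le> K" | "K < r" using r by linarith
  then show ?thesis
  proof cases
    case 1
    then show ?thesis using gi by (simp add: pat D_def)
  next
    case 2
    then show ?thesis using gi by (auto simp: pat D_def)
  next
    case 3
    then show ?thesis using gi mirror r by (auto simp: pat D_def)
  qed
qed

lemma diag_channel_cong:
  assumes "\<And>i j. g i \<noteq> g j \<longleftrightarrow> h i \<noteq> h j"
  shows "diag_channel m n c g = diag_channel m n c h"
  using assms by (simp add: diag_channel_def diag_pattern_def)

context
  fixes m n :: nat and c K :: int
  assumes m: "m \<ge> 2" and n: "n \<ge> 2" and c: "c \<in> {0, 1}"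
    and gcd_eq: "int (gcd m n) = 2 * K + 1"
begin

lemma K_nonneg: "K \<ge> 0"
  using gcd_eq by linarith

lemma sym_pattern_channel: "diag_channel m n c (sym_pattern K c S) \<in> black_channels (m - 1) (n - 1) c"
proof (rule diag_channel_in_black_channels[OF m n c])
  have per: "sym_pattern K c S (i + t * (2 * K + 1)) = sym_pattern K c S i" for i t
    by (rule periodic_add_mult) (rule sym_pattern_periodic)
  obtain a b where "int m = a * (2 * K + 1)" "int n = b * (2 * K + 1)"
    using gcd_eq by (metis dvd_def gcd_dvd1 gcd_dvd2 mult.commute of_nat_dvd_iff)
  then show "sym_pattern K c S (i + int m) = sym_pattern K c S i"
    "sym_pattern K c S (i + int n) = sym_pattern K c S i" for i
    using per by simp_all
  show "sym_pattern K c S (- i - c) = sym_pattern K c S i" for i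
    by (rule sym_pattern_reflect[OF K_nonneg])
qed

lemma sym_pattern_channel_witness:
  assumes t: "t \<in> {1..K}"
  obtains p where "\<And>S. S \<subseteq> {1..K} \<Longrightarrow> p \<in> diag_channel m n c (sym_pattern K c S) \<longleftrightarrow> t \<in> S"
proof -
  have "gcd m n \<le> m" "gcd m n \<le> n"
    using m n by simp_all
  then have bounds: "2 * K + 1 \<le> int m" "2 * K + 1 \<le> int n"
    unfolding gcd_eq[symmetric] by simp_all
  \<comment> \<open>the vertex \<open>(t, t)\<close> if \<open>c = 0\<close> and \<open>(2K + 1 - t, t)\<close> if \<open>c = 1\<close>\<close>
  define i j where "i = c * K + t * (1 - c)" and "j = c * (K - t)"
  have "(i + j + c, i - j) \<in> grid_vertices (m - 1) (n - 1)"
    using t c bounds unfolding grid_vertices_eq[OF m n] i_def j_def by auto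
  moreover have "sym_pattern K c S i \<noteq> sym_pattern K c S j \<longleftrightarrow> t \<in> S" if S: "S \<subseteq> {1..K}" for S
  proof (cases "c = 0")
    case True
    then show ?thesis
      using sym_pattern_centre[OF S, of c] sym_pattern_offset[OF S t, of c] by (simp add: i_def j_def)
  next
    case False
    then have c1: "c = 1" using c by simp
    have "sym_pattern K c S j = sym_pattern K c S (- j - c + (2 * K + 1))"
      using sym_pattern_reflect[OF K_nonneg] sym_pattern_periodic by metis
    also have "- j - c + (2 * K + 1) = c * K + t"
      by (simp add: j_def c1)
    finally show ?thesis
      using sym_pattern_centre[OF S, of c] sym_pattern_offset[OF S t, of c] by (simp add: i_def c1)
  qed
  ultimately show ?thesis
    using that[of "(i + j + c, i - j)"] diag_pattern_diag_coords[OF c]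
    by (simp add: diag_channel_def)
qed

lemma inj_on_sym_pattern_channel: "inj_on (\<lambda>S. diag_channel m n c (sym_pattern K c S)) (Pow {1..K})"
proof (rule inj_onI)
  fix S T
  assume S: "S \<in> Pow {1..K}" and T: "T \<in> Pow {1..K}"
    and eq: "diag_channel m n c (sym_pattern K c S) = diag_channel m n c (sym_pattern K c T)"
  have "t \<in> S \<longleftrightarrow> t \<in> T" if t: "t \<in> {1..K}" for t
  proof -
    obtain p where "\<And>S. S \<subseteq> {1..K} \<Longrightarrow> p \<in> diag_channel m n c (sym_pattern K c S) \<longleftrightarrow> t \<in> S"
      using sym_pattern_channel_witness[OF t] by blast
    with S T eq show ?thesis by (metis PowD)
  qed
  with S T show "S = T" by blast
qed

lemma black_channel_eq_sym_pattern_channel: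
  assumes "C \<in> black_channels (m - 1) (n - 1) c"
  shows "\<exists>S \<in> Pow {1..K}. C = diag_channel m n c (sym_pattern K c S)"
proof -
  interpret grid_black_channel m n c C
    using m n c assms by unfold_locales
  have per: "profile (i + (2 * K + 1)) = profile i" for i
    using periodic_gcd[of profile "int m" "int n", OF profile_period_m profile_period_n] gcd_eq by simp
  define S where "S = {t \<in> {1..K}. profile (c * K + t) \<noteq> profile (c * K)}"
  have "sym_pattern K c S i \<longleftrightarrow> profile i \<noteq> profile (c * K)" for i
    unfolding S_def by (rule sym_pattern_of_function[where g = profile, OF K_nonneg per profile_reflect])
  then have "diag_channel m n c profile = diag_channel m n c (sym_pattern K c S)"
    by (intro diag_channel_cong) auto
  then have "C = diag_channel m n c (sym_pattern K c S)"
    using C_eq_diag_channel by (rule trans[rotated])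
  moreover have "S \<in> Pow {1..K}" by (auto simp: S_def)
  ultimately show ?thesis by blast
qed

lemma card_black_channels_gcd: "card (black_channels (m - 1) (n - 1) c) = 2 ^ nat K"
proof -
  have "bij_betw (\<lambda>S. diag_channel m n c (sym_pattern K c S)) (Pow {1..K}) (black_channels (m - 1) (n - 1) c)"
    unfolding bij_betw_def
    using inj_on_sym_pattern_channel sym_pattern_channel black_channel_eq_sym_pattern_channel by blast
  then have "card (black_channels (m - 1) (n - 1) c) = card (Pow {1..K})"
    by (simp add: bij_betw_same_card)
  then show ?thesis by (simp add: card_Pow)
qed

end

theorem corollary4p8:
  fixes m n :: nat and c :: int
  assumes "m \<ge> 2" and "n \<ge> 2" and "even ((m - 1) * (n - 1))"
    and "c \<in> {0, 1}"
  shows "card (black_channels (m - 1) (n - 1) c) = 2 ^ ((gcd m n - 1) div 2)"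
proof -
  have "odd (gcd m n)"
  proof
    assume "even (gcd m n)"
    then have "even m" "even n" by (meson dvd_trans gcd_dvd1 gcd_dvd2)+
    with assms(1,2) have "odd ((m - 1) * (n - 1))" by simp
    with assms(3) show False by simp
  qed
  then have "int (gcd m n) = 2 * int ((gcd m n - 1) div 2) + 1"
    by presburger
  from card_black_channels_gcd[OF assms(1,2,4) this] show ?thesis
    by simp
qed

end
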